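(* Let $T>0$, $\mu,\theta>0$, $x_0\in\mathbb R$, $H\in(0,1)$, let $B^H$ be a fractional Brownian motion with Hurst index $H$ and let $X$ be the fractional Ornstein–Uhlenbeck process, i.e. the solution of $X_t=x_0-\mu\int_0^tX_s\,ds+\theta B^H_t$, $t\le T$. Let $(\pi_n)$ be a sequence of partitions of $[0,T]$ with $m_n\le c\,p_n$ for some constant $c\ge1$ and all $n$, and $m_n\to0$. Then, with the second order quadratic variation taken with index $\gamma=H$, for every $\varepsilon>0$, almost surely $$\big|V^{(2)}_{\pi_n}(X,2)-\theta^2V^{(2)}_{\pi_n}(B^H,2)\big|=O(p_n^{1-\varepsilon})\qquad(n\to\infty),$$ where the constant in $O(\cdot)$ may be random.
   Context: Partitions $\pi_n=\{0=t^n_0<\dots<t^n_{N_n}=T\}$, $\Delta^n_kt=t^n_k-t^n_{k-1}$, $m_n=\max_k\Delta^n_kt$, $p_n=\min_k\Delta^n_kt$. For a process $Y$, $\Delta^{(2)n}_{ir,k}Y=\Delta^n_kt\,Y(t^n_{k+1})+\Delta^n_{k+1}t\,Y(t^n_{k-1})-(\Delta^n_kt+\Delta^n_{k+1}t)Y(t^n_k)$ and $V^{(2)}_{\pi_n}(Y,2)=2\sum_{k=1}^{N_n-1}\Delta^n_{k+1}t\,(\Delta^{(2)n}_{ir,k}Y)^2/\big[(\Delta^n_kt)^{H+1/2}(\Delta^n_{k+1}t)^{H+1/2}(\Delta^n_kt+\Delta^n_{k+1}t)\big]$. The integral $\int_0^te^{-\mu(t-u)}dB^H_u$ in the explicit solution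 $X_t=x_0e^{-\mu t}+\theta\int_0^te^{-\mu(t-u)}dB^H_u$ is a pathwise Riemann–Stieltjes integral. *)

theory Defs
  imports "HOL-Probability.Probability" "HOL-Library.Landau_Symbols"
begin

definition fbm_cov :: "real \<Rightarrow> real \<Rightarrow> real \<Rightarrow> real" where
  "fbm_cov H s t = (\<bar>s\<bar> powr (2*H) + \<bar>t\<bar> powr (2*H) - \<bar>t - s\<bar> powr (2*H)) / 2"

text \<open>Fractional Brownian motion on [0,oo) with Hurst index H on the probability space M:
  a process with B 0 = 0 and continuous paths, whose finite-dimensional distributions
  are centered Gaussian with covariance fbm_cov H (characterised by the characteristic
  function of finite linear combinations).\<close>
definition is_fBm :: "'a measure \<Rightarrow> real \<Rightarrow> (real \<Rightarrow> 'a \<Rightarrow> real) \<Rightarrow> bool" where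
  "is_fBm M H B \<longleftrightarrow>
     prob_space M \<and>
     (\<forall>t. B t \<in> borel_measurable M) \<and>
     (\<forall>\<omega>\<in>space M. B 0 \<omega> = 0 \<and> continuous_on {0..} (\<lambda>t. B t \<omega>)) \<and>
     (\<forall>(n::nat) (ts::nat \<Rightarrow> real) (cs::nat \<Rightarrow> real). (\<forall>k<n. ts k \<ge> 0) \<longrightarrow>
        (LINT \<omega>|M. cis (\<Sum>k<n. cs k * B (ts k) \<omega>)) =
        complex_of_real (exp (- (1/2) * (\<Sum>j<n. \<Sum>k<n. cs j * cs k * fbm_cov H (ts j) (ts k)))))"

definition is_partition :: "real \<Rightarrow> nat \<Rightarrow> (nat \<Rightarrow> real) \<Rightarrow> bool" where
  "is_partition T N tp \<longleftrightarrow> N \<ge> 1 \<and> tp 0 = 0 \<and> tp N = T \<and> (\<forall>k<N. tp k < tp (Suc k))"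

definition pdelta :: "(nat \<Rightarrow> real) \<Rightarrow> nat \<Rightarrow> real" where
  "pdelta tp k = tp k - tp (k - 1)"

definition pmesh :: "nat \<Rightarrow> (nat \<Rightarrow> real) \<Rightarrow> real" where
  "pmesh N tp = Max ((pdelta tp) ` {1..N})"

definition pmin :: "nat \<Rightarrow> (nat \<Rightarrow> real) \<Rightarrow> real" where
  "pmin N tp = Min ((pdelta tp) ` {1..N})"

definition diff2 :: "(nat \<Rightarrow> real) \<Rightarrow> (real \<Rightarrow> real) \<Rightarrow> nat \<Rightarrow> real" where
  "diff2 tp Y k = pdelta tp k * Y (tp (Suc k)) + pdelta tp (Suc k) * Y (tp (k - 1))
                  - (pdelta tp k + pdelta tp (Suc k)) * Y (tp k)"

definition V2 :: "real \<Rightarrow> nat \<Rightarrow> (nat \<Rightarrow> real) \<Rightarrow> (real \<Rightarrow> real) \<Rightarrow> real" where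
  "V2 \<gamma> N tp Y = 2 * (\<Sum>k\<in>{1..<N}.
      pdelta tp (Suc k) * (diff2 tp Y k)\<^sup>2 /
      (pdelta tp k powr (\<gamma> + 1/2) * pdelta tp (Suc k) powr (\<gamma> + 1/2)
       * (pdelta tp k + pdelta tp (Suc k))))"

end

theory Submission
  imports Defs
begin

text \<open>Write X = D + \<theta> B with the drift D t = x0 - \<mu> * integral {0..t} X. Since D is
  C^1 with derivative -\<mu> X, the mean value theorem turns a second difference of D into
  -\<mu> \<Delta>_k \<Delta>_{k+1} (X \<xi> - X \<eta>), which is O(m^(2+\<alpha>)) as soon as X is \<alpha>-Hoelder, whereas second
  differences of B are O(m^(1+\<alpha>)). Paths of B are \<alpha>-Hoelder for every \<alpha> < H: Gaussian
  moments of high order 2q make the probability that some of the 2^j dyadic increments of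
  level j exceeds 2^(-\<alpha> j) summable in j, and Borel--Cantelli followed by a chaining
  argument upgrades the dyadic bound to Hoelder continuity. Since
  (a + \<theta> b)^2 - \<theta>^2 b^2 = a (a + 2 \<theta> b) and m <= c p, each of the at most T/p summands of
  the difference of the variations is O(p^(2+2\<alpha>-2H)); choosing \<alpha> close to H gives the rate
  p^(1-\<epsilon>).\<close>

section \<open>Gaussian increments of fractional Brownian motion\<close>

lemma fBm_increment_char:
  assumes fbm: "is_fBm M H B" and s: "s \<ge> 0" and t: "t \<ge> 0"
  shows "char (distr M borel (\<lambda>\<omega>. B t \<omega> - B s \<omega>)) u
       = complex_of_real (exp (- (1/2) * (u^2 * \<bar>t - s\<bar> powr (2*H))))"
proof -
  have meas: "\<And>t. B t \<in> borel_measurable M" using fbm unfolding is_fBm_def by auto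
  define ts where "ts = (\<lambda>k::nat. if k = 0 then t else s)"
  define cs where "cs = (\<lambda>k::nat. if k = 0 then u else -u)"
  have "(LINT \<omega>|M. cis (\<Sum>k<2. cs k * B (ts k) \<omega>)) =
        complex_of_real (exp (- (1/2) * (\<Sum>j<2. \<Sum>k<2. cs j * cs k * fbm_cov H (ts j) (ts k))))"
    using fbm s t unfolding is_fBm_def ts_def by auto
  moreover have "(\<Sum>j<2. \<Sum>k<2. cs j * cs k * fbm_cov H (ts j) (ts k)) = u^2 * \<bar>t - s\<bar> powr (2*H)"
    using s t by (simp add: numeral_2_eq_2 cs_def ts_def fbm_cov_def abs_minus_commute
        power2_eq_square field_simps)
  moreover have "char (distr M borel (\<lambda>\<omega>. B t \<omega> - B s \<omega>)) u
      = (LINT \<omega>|M. cis (\<Sum>k<2. cs k * B (ts k) \<omega>))"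
    unfolding char_def using meas
    by (subst integral_distr) (auto simp: numeral_2_eq_2 cs_def ts_def cis_conv_exp algebra_simps)
  ultimately show ?thesis by simp
qed

lemma fBm_increment_distr:
  assumes fbm: "is_fBm M H B" and s: "s \<ge> 0" and t: "t \<ge> 0"
  shows "distr M borel (\<lambda>\<omega>. B t \<omega> - B s \<omega>) =
         distr std_normal_distribution borel (\<lambda>x. \<bar>t - s\<bar> powr H * x)"
proof -
  have meas: "\<And>t. B t \<in> borel_measurable M" and "prob_space M"
    using fbm unfolding is_fBm_def by auto
  interpret prob_space M by fact
  have std: "prob_space std_normal_distribution"
    using real_dist_normal_dist by (simp add: real_distribution_def)
  let ?\<sigma> = "\<bar>t - s\<bar> powr H"
  show ?thesis
  proof (rule Levy_uniqueness)
    show "real_distribution (distr M borel (\<lambda>\<omega>. B t \<omega> - B s \<omega>))"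
      using meas by (intro real_distribution_distr) auto
    show "real_distribution (distr std_normal_distribution borel (\<lambda>x. ?\<sigma> * x))"
      using prob_space.real_distribution_distr[OF std] by auto
    show "char (distr M borel (\<lambda>\<omega>. B t \<omega> - B s \<omega>)) =
          char (distr std_normal_distribution borel (\<lambda>x. ?\<sigma> * x))"
    proof
      fix u
      have "char (distr std_normal_distribution borel (\<lambda>x. ?\<sigma> * x)) u
          = char std_normal_distribution (u * ?\<sigma>)"
        unfolding char_def by (subst integral_distr) (auto simp: algebra_simps)
      also have "\<dots> = complex_of_real (exp (- (1/2) * (u^2 * \<bar>t - s\<bar> powr (2*H))))"
        unfolding char_std_normal_distribution
        by (simp add: power_mult_distrib powr_powr[symmetric] powr_realpow[symmetric]
             mult.commute del: powr_realpow)
      finally show "char (distr M borel (\<lambda>\<omega>. B t \<omega> - B s \<omega>)) u =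
          char (distr std_normal_distribution borel (\<lambda>x. ?\<sigma> * x)) u"
        using fBm_increment_char[OF fbm s t] by simp
    qed
  qed
qed

lemma fBm_increment_moment:
  assumes fbm: "is_fBm M H B" and s: "s \<ge> 0" and t: "t \<ge> 0"
  shows "integrable M (\<lambda>\<omega>. (B t \<omega> - B s \<omega>) ^ (2*q))"
    and "(LINT \<omega>|M. (B t \<omega> - B s \<omega>) ^ (2*q)) =
         (\<bar>t - s\<bar> powr H) ^ (2*q) * (LINT x|std_normal_distribution. x ^ (2*q))"
proof -
  have meas: "\<And>t. B t \<in> borel_measurable M" using fbm unfolding is_fBm_def by auto
  let ?\<sigma> = "\<bar>t - s\<bar> powr H"
  note distr = fBm_increment_distr[OF fbm s t]
  have "integrable (distr M borel (\<lambda>\<omega>. B t \<omega> - B s \<omega>)) (\<lambda>y. y ^ (2*q))"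
    unfolding distr
    by (subst integrable_distr_eq) (auto simp: power_mult_distrib
        intro!: integrable_mult_right integrable_std_normal_distribution_moment)
  then show "integrable M (\<lambda>\<omega>. (B t \<omega> - B s \<omega>) ^ (2*q))"
    using meas by (subst (asm) integrable_distr_eq) auto
  have "(LINT \<omega>|M. (B t \<omega> - B s \<omega>) ^ (2*q)) =
        (LINT y|distr M borel (\<lambda>\<omega>. B t \<omega> - B s \<omega>). y ^ (2*q))"
    using meas by (subst integral_distr) auto
  also have "\<dots> = (LINT x|std_normal_distribution. (?\<sigma> * x) ^ (2*q))"
    unfolding distr by (subst integral_distr) auto
  also have "\<dots> = ?\<sigma> ^ (2*q) * (LINT x|std_normal_distribution. x ^ (2*q))"
    by (simp add: power_mult_distrib)
  finally show "(LINT \<omega>|M. (B t \<omega> - B s \<omega>) ^ (2*q)) =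
         ?\<sigma> ^ (2*q) * (LINT x|std_normal_distribution. x ^ (2*q))" .
qed

lemma fBm_increment_tail:
  assumes fbm: "is_fBm M H B" and s: "s \<ge> 0" and t: "t \<ge> 0" and x: "x > 0" and q: "q > 0"
  shows "measure M {\<omega>\<in>space M. x \<le> \<bar>B t \<omega> - B s \<omega>\<bar>} \<le>
     (\<bar>t - s\<bar> powr H) ^ (2*q) * (LINT x|std_normal_distribution. x ^ (2*q)) / x ^ (2*q)"
proof -
  have "\<And>z. (x \<le> \<bar>z\<bar>) = (x^(2*q) \<le> \<bar>z\<bar>^(2*q))"
    using x q by (simp add: power_mono_iff)
  then have "{\<omega>\<in>space M. x \<le> \<bar>B t \<omega> - B s \<omega>\<bar>}
      = {\<omega>\<in>space M. x^(2*q) \<le> (B t \<omega> - B s \<omega>)^(2*q)}"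
    by (simp add: power_even_abs)
  also have "measure M \<dots> \<le> (LINT \<omega>|M. (B t \<omega> - B s \<omega>) ^ (2*q)) / x^(2*q)"
    by (rule integral_Markov_inequality_measure[where A="space M"])
       (use fBm_increment_moment(1)[OF fbm s t] x in \<open>auto simp: zero_le_even_power\<close>)
  finally show ?thesis using fBm_increment_moment(2)[OF fbm s t] by simp
qed

lemma dyadic_step_powr:
  assumes T: "T > 0"
  shows "\<bar>T * real (Suc k) / 2^j - T * real k / 2^j\<bar> powr H = T powr H * (2 powr (-H))^j"
proof -
  have "\<bar>T * real (Suc k) / 2^j - T * real k / 2^j\<bar> = T / 2^j"
    using T by (simp add: field_simps)
  moreover have "(T / 2^j) powr H = T powr H * (2 powr (-H))^j"
  proof -
    have "(T / 2^j) powr H = T powr H / (2^j) powr H" using T by (simp add: powr_divide)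
    also have "(2::real)^j = 2 powr real j" by (simp add: powr_realpow)
    also have "(2 powr real j) powr H = (2 powr H) powr real j" by (simp add: powr_powr mult.commute)
    also have "\<dots> = (2 powr H)^j" by (simp add: powr_realpow)
    finally show ?thesis by (simp add: powr_minus power_inverse divide_inverse powr_realpow)
  qed
  ultimately show ?thesis by simp
qed

lemma fBm_dyadic_exceedance_prob:
  assumes fbm: "is_fBm M H B" and T: "T > 0" and \<alpha>H: "\<alpha> < H"
  obtains C where "\<And>j. measure M (\<Union>k<(2::nat)^j. {\<omega>\<in>space M.
      (2 powr (-\<alpha>))^j \<le> \<bar>B (T * real (Suc k) / 2^j) \<omega> - B (T * real k / 2^j) \<omega>\<bar>}) \<le> C * (1/2)^j"
proof -
  have meas: "\<And>t. B t \<in> borel_measurable M" and "prob_space M"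
    using fbm unfolding is_fBm_def by auto
  interpret prob_space M by fact
  define \<gamma> where "\<gamma> = (2::real) powr (\<alpha> - H)"
  define \<rho> where "\<rho> = (2::real) powr (-\<alpha>)"
  have \<gamma>: "0 < \<gamma>" "\<gamma> < 1" using \<alpha>H unfolding \<gamma>_def by (auto simp: powr_less_one)
  have \<rho>: "0 < \<rho>" unfolding \<rho>_def by auto
  \<comment> \<open>with \<gamma>^(2q) \<le> 1/4 the union bound over the 2^j increments of level j stays geometric\<close>
  have "(\<lambda>n. \<gamma>^n) \<longlonglongrightarrow> 0" using \<gamma> by (intro LIMSEQ_power_zero) auto
  then have "eventually (\<lambda>n. \<gamma>^n < 1/4) sequentially" by (rule order_tendstoD) auto
  then obtain n0 where n0: "\<And>n. n \<ge> n0 \<Longrightarrow> \<gamma>^n < 1/4" by (auto simp: eventually_sequentially)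
  define q where "q = Suc n0"
  have q: "q > 0" "\<gamma>^(2*q) \<le> 1/4" using n0[of "2*q"] unfolding q_def by auto
  define Kq where "Kq = (LINT x|std_normal_distribution. x ^ (2*q))"
  have "Kq \<ge> 0" unfolding Kq_def by (rule integral_nonneg_AE) (auto simp: zero_le_even_power)
  define C where "C = Kq * (T powr H)^(2*q)"
  have C: "C \<ge> 0" unfolding C_def using \<open>Kq \<ge> 0\<close> by auto
  define Z where "Z = (\<lambda>j k \<omega>. B (T * real (Suc k) / 2^j) \<omega> - B (T * real k / 2^j) \<omega>)"
  have "measure M (\<Union>k<(2::nat)^j. {\<omega>\<in>space M. \<rho>^j \<le> \<bar>Z j k \<omega>\<bar>}) \<le> C * (1/2)^j" for j
  proof -
    have "measure M (\<Union>k<(2::nat)^j. {\<omega>\<in>space M. \<rho>^j \<le> \<bar>Z j k \<omega>\<bar>})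
        \<le> (\<Sum>k<(2::nat)^j. measure M {\<omega>\<in>space M. \<rho>^j \<le> \<bar>Z j k \<omega>\<bar>})"
      using meas unfolding Z_def by (intro finite_measure_subadditive_finite) auto
    also have "\<dots> \<le> (\<Sum>k<(2::nat)^j. (T powr H * (2 powr (-H))^j) ^ (2*q) * Kq / (\<rho>^j) ^ (2*q))"
    proof (rule sum_mono)
      fix k
      show "measure M {\<omega>\<in>space M. \<rho>^j \<le> \<bar>Z j k \<omega>\<bar>}
          \<le> (T powr H * (2 powr (-H))^j) ^ (2*q) * Kq / (\<rho>^j) ^ (2*q)"
        using fBm_increment_tail[OF fbm _ _ _ q(1), of "T * real k / 2^j" "T * real (Suc k) / 2^j" "\<rho>^j"]
          T \<rho> dyadic_step_powr[OF T, of k j H] unfolding Z_def Kq_def by auto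
    qed
    also have "\<dots> = 2^j * (C * (\<gamma>^(2*q))^j)"
    proof -
      have "(T powr H * (2 powr (-H))^j) ^ (2*q) * Kq / (\<rho>^j) ^ (2*q)
           = C * ((2 powr (-H)) / \<rho>)^(2*q*j)"
        unfolding C_def using \<rho> by (simp add: power_mult_distrib power_divide field_simps
            power_mult[symmetric] mult.commute)
      also have "(2 powr (-H)) / \<rho> = \<gamma>" unfolding \<gamma>_def \<rho>_def by (simp add: powr_diff[symmetric])
      finally show ?thesis by (simp add: power_mult)
    qed
    also have "\<dots> \<le> 2^j * (C * (1/4)^j)"
      using C q \<gamma> by (intro mult_left_mono power_mono) auto
    also have "\<dots> = C * (1/2)^j" by (simp add: power_divide field_simps power_mult_distrib[symmetric])
    finally show ?thesis .
  qed
  then show ?thesis using that unfolding Z_def \<rho>_def by blast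
qed

lemma fBm_dyadic_increments_AE:
  assumes fbm: "is_fBm M H B" and T: "T > 0" and \<alpha>H: "\<alpha> < H"
  shows "AE \<omega> in M. \<exists>J. \<forall>j\<ge>J. \<forall>k<(2::nat)^j.
      \<bar>B (T * real (Suc k) / 2^j) \<omega> - B (T * real k / 2^j) \<omega>\<bar> \<le> (2 powr (-\<alpha>))^j"
proof -
  have meas: "\<And>t. B t \<in> borel_measurable M" and "prob_space M"
    using fbm unfolding is_fBm_def by auto
  interpret prob_space M by fact
  define A where "A = (\<lambda>j. \<Union>k<(2::nat)^j. {\<omega>\<in>space M.
      (2 powr (-\<alpha>))^j \<le> \<bar>B (T * real (Suc k) / 2^j) \<omega> - B (T * real k / 2^j) \<omega>\<bar>})"
  obtain C where C: "\<And>j. measure M (A j) \<le> C * (1/2)^j"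
    using fBm_dyadic_exceedance_prob[OF fbm T \<alpha>H] unfolding A_def by blast
  have "summable (\<lambda>j. measure M (A j))"
    by (rule summable_comparison_test[where g="\<lambda>j. C * (1/2)^j"])
       (use C in \<open>auto intro!: summable_mult complete_algebra_summable_geometric\<close>)
  moreover have "A j \<in> sets M" for j
    unfolding A_def using meas by (intro sets.finite_UN) auto
  ultimately have "AE \<omega> in M. eventually (\<lambda>j. \<omega> \<in> space M - A j) sequentially"
    by (intro borel_cantelli_AE1) (auto simp: less_top[symmetric])
  then show ?thesis
    by (rule AE_mp, intro AE_I2 impI) (force simp: A_def eventually_sequentially)
qed

section \<open>Hoelder continuity from dyadic increments\<close>

definition dyadic_index :: "real \<Rightarrow> nat \<Rightarrow> real \<Rightarrow> int" where
  "dyadic_index T j s = \<lfloor>s * 2^j / T\<rfloor>"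

definition dyadic_floor :: "real \<Rightarrow> nat \<Rightarrow> real \<Rightarrow> real" where
  "dyadic_floor T j s = T * of_int (dyadic_index T j s) / 2^j"

lemma dyadic_index_bounds:
  assumes T: "T > 0" and s: "0 \<le> s" "s \<le> T"
  shows "0 \<le> dyadic_index T j s" "dyadic_index T j s \<le> 2^j"
proof -
  have "0 \<le> s * 2^j / T" "s * 2^j / T \<le> 2^j" using T s by (auto simp: field_simps)
  then show "0 \<le> dyadic_index T j s" "dyadic_index T j s \<le> 2^j"
    unfolding dyadic_index_def by (auto simp: le_floor_iff floor_le_iff)
qed

lemma dyadic_floor_bounds:
  assumes T: "T > 0" and s: "0 \<le> s" "s \<le> T"
  shows "0 \<le> dyadic_floor T j s" "dyadic_floor T j s \<le> s" "s - dyadic_floor T j s \<le> T / 2^j"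
proof -
  have "of_int (dyadic_index T j s) \<le> s * 2^j / T" "s * 2^j / T < of_int (dyadic_index T j s) + 1"
    unfolding dyadic_index_def by linarith+
  then have "T * of_int (dyadic_index T j s) \<le> s * 2^j" "s * 2^j < T * (of_int (dyadic_index T j s) + 1)"
    using T by (simp_all add: field_simps)
  then have "T * of_int (dyadic_index T j s) / 2^j \<le> s" "s < T * (of_int (dyadic_index T j s) + 1) / 2^j"
    by (simp_all add: divide_le_eq less_divide_eq)
  then show "dyadic_floor T j s \<le> s" "s - dyadic_floor T j s \<le> T / 2^j"
    unfolding dyadic_floor_def by (simp_all add: add_divide_distrib distrib_left)
  show "0 \<le> dyadic_floor T j s"
    unfolding dyadic_floor_def using dyadic_index_bounds(1)[OF T s] T by simp
qed

lemma dyadic_index_Suc: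
  "dyadic_index T (Suc j) s = 2 * dyadic_index T j s \<or>
   dyadic_index T (Suc j) s = 2 * dyadic_index T j s + 1"
proof -
  define y where "y = s * 2^j / T"
  have "s * 2^Suc j / T = 2 * y" unfolding y_def by simp
  moreover have "2 * \<lfloor>y\<rfloor> \<le> \<lfloor>2*y\<rfloor>" "\<lfloor>2*y\<rfloor> \<le> 2 * \<lfloor>y\<rfloor> + 1"
    by (simp_all add: le_floor_iff floor_le_iff) linarith
  ultimately show ?thesis unfolding dyadic_index_def y_def[symmetric] by linarith
qed

lemma dyadic_floor_tendsto:
  assumes T: "T > 0" and s: "0 \<le> s" "s \<le> T"
  shows "(\<lambda>j. dyadic_floor T j s) \<longlonglongrightarrow> s"
proof -
  have "(\<lambda>j. T * (1/2)^j) \<longlonglongrightarrow> 0"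
    using tendsto_mult_right_zero[OF LIMSEQ_power_zero[of "1/2::real"]] by simp
  then have "(\<lambda>j. s - dyadic_floor T j s) \<longlonglongrightarrow> 0"
    by (rule Lim_transform_bound[rotated])
       (use dyadic_floor_bounds[OF T s] T in \<open>auto simp: power_divide intro!: always_eventually\<close>)
  then have "(\<lambda>j. s - (s - dyadic_floor T j s)) \<longlonglongrightarrow> s - 0" by (intro tendsto_diff tendsto_const)
  then show ?thesis by simp
qed

lemma dyadic_scale_exists:
  fixes T h :: real
  assumes h: "0 < h" "h \<le> T / 2^J"
  obtains m where "J \<le> m" "h \<le> T / 2^m" "T / 2^Suc m < h"
proof -
  have T: "0 < T" using h by (auto simp: zero_less_divide_iff dest: order.strict_trans2)
  have "(\<lambda>n. T * (1/2)^n) \<longlonglongrightarrow> 0"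
    using tendsto_mult_right_zero[OF LIMSEQ_power_zero[of "1/2::real"]] by simp
  then have "eventually (\<lambda>n. T * (1/2)^n < h) sequentially"
    using h by (intro order_tendstoD) auto
  then obtain b where b: "T * (1/2)^b < h" by (auto simp: eventually_sequentially)
  have "y \<le> b" if "h \<le> T / 2^y" for y
  proof (rule ccontr)
    assume "\<not> y \<le> b"
    then have "T / 2^y \<le> T / 2^b"
      using T by (intro divide_left_mono power_increasing) auto
    then show False using that b by (simp add: power_divide)
  qed
  then obtain m where m: "h \<le> T / 2^m" "\<forall>y. h \<le> T / 2^y \<longrightarrow> y \<le> m"
    using Nat.ex_has_greatest_nat[of "\<lambda>y. h \<le> T / 2^y" J b] h by blast
  show ?thesis
  proof (rule that)
    show "J \<le> m" using m h by auto
    show "T / 2^Suc m < h" using m(2) by (metis Suc_n_not_le_n not_le)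
  qed (rule m(1))
qed

lemma powr_neg_power_eq: "((2::real) powr (-a))^m = (1/2^m) powr a"
proof -
  have "((2::real) powr (-a))^m = 2 powr (- (real m * a))"
    by (simp add: powr_realpow[symmetric] powr_powr mult.commute)
  moreover have "(1/2^m) = (2::real) powr (- real m)" by (simp add: powr_minus_divide powr_realpow)
  then have "(1/2^m) powr a = 2 powr (- (real m * a))" by (simp add: powr_powr)
  ultimately show ?thesis by simp
qed

locale dyadic_increment_bound =
  fixes f :: "real \<Rightarrow> real" and T \<alpha> :: real and J :: nat
  assumes T: "T > 0" and \<alpha>: "0 < \<alpha>"
    and cont: "continuous_on {0..T} f"
    and increment: "\<And>j k. j \<ge> J \<Longrightarrow> 0 \<le> k \<Longrightarrow> k < 2^j \<Longrightarrow>
          \<bar>f (T * of_int (k+1) / 2^j) - f (T * of_int k / 2^j)\<bar> \<le> (2 powr (-\<alpha>))^j"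
begin

definition "\<rho> = (2::real) powr (-\<alpha>)"

lemma \<rho>_bounds: "0 < \<rho>" "\<rho> < 1"
  unfolding \<rho>_def using \<alpha> by (auto simp: powr_less_one)

lemma dyadic_floor_step:
  assumes s: "0 \<le> s" "s \<le> T" and j: "Suc j \<ge> J"
  shows "\<bar>f (dyadic_floor T (Suc j) s) - f (dyadic_floor T j s)\<bar> \<le> \<rho>^Suc j"
  using dyadic_index_Suc[of T j s]
proof
  assume "dyadic_index T (Suc j) s = 2 * dyadic_index T j s"
  then show ?thesis using \<rho>_bounds by (simp add: dyadic_floor_def)
next
  define k where "k = 2 * dyadic_index T j s"
  assume Suc: "dyadic_index T (Suc j) s = 2 * dyadic_index T j s + 1"
  have "0 \<le> k" "k < 2^Suc j"
    using dyadic_index_bounds[OF T s, of j] dyadic_index_bounds[OF T s, of "Suc j"] Suc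
    unfolding k_def by auto
  moreover have "dyadic_floor T (Suc j) s = T * of_int (k+1) / 2^Suc j"
    "dyadic_floor T j s = T * of_int k / 2^Suc j"
    unfolding dyadic_floor_def Suc k_def by simp_all
  ultimately show ?thesis using increment[OF j] unfolding \<rho>_def by simp
qed

lemma dyadic_floor_chain:
  assumes s: "0 \<le> s" "s \<le> T" and m: "m \<ge> J" and n: "m \<le> n"
  shows "\<bar>f (dyadic_floor T n s) - f (dyadic_floor T m s)\<bar> \<le> (\<rho>^Suc m - \<rho>^Suc n) / (1 - \<rho>)"
  using n
proof (induction n rule: dec_induct)
  case (step n)
  have "\<bar>f (dyadic_floor T (Suc n) s) - f (dyadic_floor T m s)\<bar>
      \<le> \<rho>^Suc n + (\<rho>^Suc m - \<rho>^Suc n) / (1 - \<rho>)"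
    using dyadic_floor_step[OF s, of n] step m by linarith
  also have "\<dots> = (\<rho>^Suc m - \<rho>^Suc (Suc n)) / (1 - \<rho>)"
    using \<rho>_bounds by (simp add: field_simps)
  finally show ?case .
qed simp

lemma dist_dyadic_floor:
  assumes s: "0 \<le> s" "s \<le> T" and m: "m \<ge> J"
  shows "\<bar>f s - f (dyadic_floor T m s)\<bar> \<le> \<rho>^m / (1 - \<rho>)"
proof (rule LIMSEQ_le_const2)
  have "\<forall>n. dyadic_floor T n s \<in> {0..T}"
    using dyadic_floor_bounds[OF T s] s by (auto intro: order_trans)
  then have "(\<lambda>n. f (dyadic_floor T n s)) \<longlonglongrightarrow> f s"
    using s by (intro continuous_on_tendsto_compose[OF cont dyadic_floor_tendsto[OF T s]])
      (auto intro!: always_eventually)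
  then show "(\<lambda>n. \<bar>f (dyadic_floor T n s) - f (dyadic_floor T m s)\<bar>) \<longlonglongrightarrow> \<bar>f s - f (dyadic_floor T m s)\<bar>"
    by (intro tendsto_intros)
  have "\<rho>^Suc m \<le> \<rho>^m" "0 \<le> \<rho>^Suc n" for n
    using \<rho>_bounds by (simp_all add: mult_left_le_one_le)
  then have "\<rho>^Suc m - \<rho>^Suc n \<le> \<rho>^m" for n
    by (smt (verit))
  then have "(\<rho>^Suc m - \<rho>^Suc n) / (1 - \<rho>) \<le> \<rho>^m / (1 - \<rho>)" for n
    using \<rho>_bounds by (intro divide_right_mono) auto
  then show "\<exists>N. \<forall>n\<ge>N. \<bar>f (dyadic_floor T n s) - f (dyadic_floor T m s)\<bar> \<le> \<rho>^m / (1 - \<rho>)"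
    using dyadic_floor_chain[OF s m] by (meson order_trans)
qed

lemma increment_at_scale:
  assumes s: "0 \<le> s" and st: "s \<le> t" and t: "t \<le> T" and h: "t - s \<le> T / 2^m" and m: "m \<ge> J"
  shows "\<bar>f t - f s\<bar> \<le> \<rho>^m * (1 + 2 / (1 - \<rho>))"
proof -
  have s': "s \<le> T" and t': "0 \<le> t" using s st t by auto
  let ?i = "dyadic_index T m"
  have "t * 2^m / T \<le> s * 2^m / T + 1" using h T by (simp add: field_simps)
  then have up: "?i t \<le> ?i s + 1" unfolding dyadic_index_def using floor_mono by fastforce
  have lo: "?i s \<le> ?i t" unfolding dyadic_index_def using st T
    by (intro floor_mono divide_right_mono mult_right_mono) auto
  \<comment> \<open>s and t lie in the same or in adjacent dyadic intervals of level m\<close>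
  have mid: "\<bar>f (dyadic_floor T m t) - f (dyadic_floor T m s)\<bar> \<le> \<rho>^m"
  proof (cases "?i t = ?i s")
    case False
    then have "?i t = ?i s + 1" using up lo by linarith
    moreover have "0 \<le> ?i s" "?i s < 2^m"
      using dyadic_index_bounds[OF T s s'] dyadic_index_bounds[OF T t' t, of m] up lo False by auto
    ultimately show ?thesis using increment[OF m] unfolding dyadic_floor_def \<rho>_def by simp
  qed (use \<rho>_bounds in \<open>simp add: dyadic_floor_def\<close>)
  have "\<bar>f t - f s\<bar> \<le> \<rho>^m / (1 - \<rho>) + \<rho>^m + \<rho>^m / (1 - \<rho>)"
    using dist_dyadic_floor[OF t' t m] dist_dyadic_floor[OF s s' m] mid by linarith
  also have "\<dots> = \<rho>^m * (1 + 2 / (1 - \<rho>))" by (simp add: algebra_simps)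
  finally show ?thesis .
qed

lemma holder_continuous:
  obtains L where "L \<ge> 0"
    "\<And>s t. 0 \<le> s \<Longrightarrow> s \<le> t \<Longrightarrow> t \<le> T \<Longrightarrow> \<bar>f t - f s\<bar> \<le> L * (t - s) powr \<alpha>"
proof -
  have "bounded (f ` {0..T})" by (intro compact_imp_bounded compact_continuous_image cont) auto
  then obtain K where "\<forall>x\<in>f ` {0..T}. norm x \<le> K" unfolding bounded_iff by blast
  then have K: "\<And>x. x \<in> {0..T} \<Longrightarrow> \<bar>f x\<bar> \<le> K" by auto
  have K0: "K \<ge> 0" using K[of 0] T by auto
  define C0 where "C0 = 1 + 2 / (1 - \<rho>)"
  have C0: "C0 \<ge> 0" unfolding C0_def using \<rho>_bounds by auto
  define L where "L = C0 * (2/T) powr \<alpha> + 2 * K * (2^J/T) powr \<alpha>"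
  have "\<bar>f t - f s\<bar> \<le> L * (t - s) powr \<alpha>" if s: "0 \<le> s" and st: "s < t" and t: "t \<le> T" for s t
  proof (cases "t - s \<le> T / 2^J")
    case True
    obtain m where m: "J \<le> m" "t - s \<le> T / 2^m" "T / 2^Suc m < t - s"
      using dyadic_scale_exists[OF _ True] st by auto
    have "\<bar>f t - f s\<bar> \<le> (1/2^m) powr \<alpha> * C0"
      using increment_at_scale[OF s less_imp_le[OF st] t m(2,1)]
      unfolding C0_def \<rho>_def powr_neg_power_eq by simp
    also have "\<dots> \<le> (2/T * (t - s)) powr \<alpha> * C0"
      using m(3) T \<alpha> C0 by (intro mult_right_mono powr_mono2) (auto simp: field_simps)
    also have "\<dots> = C0 * (2/T) powr \<alpha> * (t - s) powr \<alpha>"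
      by (subst powr_mult) (use T st in \<open>auto simp: mult_ac\<close>)
    also have "\<dots> \<le> L * (t - s) powr \<alpha>"
      unfolding L_def using K0 by (intro mult_right_mono) auto
    finally show ?thesis .
  next
    case False
    have "\<bar>f t - f s\<bar> \<le> 2 * K" using K[of t] K[of s] s st t by auto
    also have "\<dots> \<le> 2 * K * (2^J/T * (t - s)) powr \<alpha>"
    proof -
      have "1 \<le> 2^J/T * (t - s)" using False T by (simp add: field_simps)
      then have "1 \<le> (2^J/T * (t - s)) powr \<alpha>" using \<alpha> by (intro ge_one_powr_ge_zero) auto
      then show ?thesis using K0 mult_left_mono[of 1 _ K] by simp
    qed
    also have "\<dots> = 2 * K * (2^J/T) powr \<alpha> * (t - s) powr \<alpha>"
      by (subst powr_mult) (use T st in \<open>auto simp: mult_ac\<close>)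
    also have "\<dots> \<le> L * (t - s) powr \<alpha>"
      unfolding L_def using C0 by (intro mult_right_mono) auto
    finally show ?thesis .
  qed
  moreover have "L \<ge> 0" unfolding L_def using C0 K0 by auto
  ultimately show ?thesis using that by (metis abs_0 diff_self mult_nonneg_nonneg order_le_less powr_ge_zero)
qed

end

lemma fBm_AE_holder:
  assumes fbm: "is_fBm M H B" and T: "T > 0" and \<alpha>: "0 < \<alpha>" "\<alpha> < H"
  shows "AE \<omega> in M. \<exists>L\<ge>0. \<forall>s t. 0 \<le> s \<longrightarrow> s \<le> t \<longrightarrow> t \<le> T \<longrightarrow>
      \<bar>B t \<omega> - B s \<omega>\<bar> \<le> L * (t - s) powr \<alpha>"
  using fBm_dyadic_increments_AE[OF fbm T \<alpha>(2)] AE_space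
proof eventually_elim
  case (elim \<omega>)
  then obtain J where J: "\<And>j k. j \<ge> J \<Longrightarrow> k < (2::nat)^j \<Longrightarrow>
      \<bar>B (T * real (Suc k) / 2^j) \<omega> - B (T * real k / 2^j) \<omega>\<bar> \<le> (2 powr (-\<alpha>))^j" by blast
  have "continuous_on {0..T} (\<lambda>t. B t \<omega>)"
    using fbm elim unfolding is_fBm_def by (auto intro: continuous_on_subset)
  moreover have "\<bar>B (T * of_int (k+1) / 2^j) \<omega> - B (T * of_int k / 2^j) \<omega>\<bar> \<le> (2 powr (-\<alpha>))^j"
    if "J \<le> j" "0 \<le> k" "k < 2^j" for j and k :: int
  proof -
    have "nat k < (2::nat)^j" using that by (metis nat_less_iff of_nat_numeral of_nat_power)
    moreover have "real (nat k) = of_int k" "real (Suc (nat k)) = of_int (k+1)" using that by auto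
    ultimately show ?thesis using J[OF that(1)] by (metis add.commute)
  qed
  ultimately interpret dyadic_increment_bound "\<lambda>t. B t \<omega>" T \<alpha> J
    using T \<alpha> by unfold_locales auto
  show ?case using holder_continuous by metis
qed

section \<open>Partitions and the summands of the second order variation\<close>

lemma partition_strict_mono:
  assumes P: "is_partition T N tp" and ij: "i < j" and jN: "j \<le> N"
  shows "tp i < tp j"
  using ij jN
proof (induction j)
  case (Suc j)
  then have "tp j < tp (Suc j)" using P unfolding is_partition_def by auto
  with Suc show ?case by (cases "i = j") auto
qed simp

lemma partition_range:
  assumes P: "is_partition T N tp" and k: "k \<le> N"
  shows "0 \<le> tp k" "tp k \<le> T"
proof -
  have "tp 0 = 0" "tp N = T" using P unfolding is_partition_def by auto
  then show "0 \<le> tp k" "tp k \<le> T"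
    using partition_strict_mono[OF P, of 0 k] partition_strict_mono[OF P, of k N] k
    by (cases "k = 0"; cases "k = N"; auto)+
qed

lemma pmin_le_pdelta_le_pmesh:
  assumes "1 \<le> k" "k \<le> N"
  shows "pmin N tp \<le> pdelta tp k" "pdelta tp k \<le> pmesh N tp"
  unfolding pmin_def pmesh_def using assms by (auto intro!: Min_le Max_ge)

lemma pmin_pos:
  assumes P: "is_partition T N tp"
  shows "0 < pmin N tp"
proof -
  have "N \<ge> 1" using P unfolding is_partition_def by auto
  then have "pmin N tp \<in> pdelta tp ` {1..N}" unfolding pmin_def by (intro Min_in) auto
  then show ?thesis
    using partition_strict_mono[OF P, of "k - 1" k for k] unfolding pdelta_def by auto
qed

lemma card_mult_pmin_le:
  assumes P: "is_partition T N tp"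
  shows "real N * pmin N tp \<le> T"
proof -
  have "tp 0 = 0" "tp N = T" using P unfolding is_partition_def by auto
  then have "(\<Sum>k\<in>{1..N}. pdelta tp k) = T"
    using sum.atLeast1_atMost_eq[of "pdelta tp" N]
    by (simp add: pdelta_def sum_lessThan_telescope)
  moreover have "real N * pmin N tp \<le> (\<Sum>k\<in>{1..N}. pdelta tp k)"
    using sum_mono[of "{1..N}" "\<lambda>_. pmin N tp" "pdelta tp"] pmin_le_pdelta_le_pmesh by auto
  ultimately show ?thesis by simp
qed

lemma sum_le_pmin_powr:
  fixes f :: "nat \<Rightarrow> real"
  assumes P: "is_partition T N tp" and C: "C \<ge> 0"
    and f: "\<And>k. k \<in> {1..<N} \<Longrightarrow> \<bar>f k\<bar> \<le> C * pmin N tp powr (1 + e)"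
  shows "\<bar>\<Sum>k\<in>{1..<N}. f k\<bar> \<le> T * C * pmin N tp powr e"
proof -
  define p where "p = pmin N tp"
  have p: "0 < p" unfolding p_def by (rule pmin_pos[OF P])
  have "\<bar>\<Sum>k\<in>{1..<N}. f k\<bar> \<le> (\<Sum>k\<in>{1..<N}. C * p powr (1 + e))"
    using f unfolding p_def by (intro order_trans[OF sum_abs] sum_mono) auto
  also have "\<dots> = real (N - 1) * (C * p powr (1 + e))" by simp
  also have "\<dots> \<le> real N * (C * p powr (1 + e))"
    using C by (intro mult_right_mono) auto
  also have "\<dots> = C * (real N * p) * p powr e"
    using p by (simp add: powr_add mult_ac)
  also have "\<dots> \<le> C * T * p powr e"
    using card_mult_pmin_le[OF P] C unfolding p_def by (intro mult_left_mono mult_right_mono) auto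
  finally show ?thesis unfolding p_def by (simp add: mult_ac)
qed

lemma partition_neighbours:
  assumes P: "is_partition T N tp" and k: "1 \<le> k" "Suc k \<le> N"
  shows "0 \<le> tp (k-1)" "tp (k-1) \<le> tp k" "tp k \<le> tp (Suc k)" "tp (Suc k) \<le> T"
    "pdelta tp k = tp k - tp (k-1)" "pdelta tp (Suc k) = tp (Suc k) - tp k"
    "pmin N tp \<le> pdelta tp k" "pdelta tp k \<le> pmesh N tp"
    "pmin N tp \<le> pdelta tp (Suc k)" "pdelta tp (Suc k) \<le> pmesh N tp"
  using partition_range[OF P, of "k-1"] partition_range[OF P, of "Suc k"]
    partition_strict_mono[OF P, of "k-1" k] partition_strict_mono[OF P, of k "Suc k"]
    pmin_le_pdelta_le_pmesh[of k N tp] pmin_le_pdelta_le_pmesh[of "Suc k" N tp] k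
  by (auto simp: pdelta_def)

lemma diff2_eq:
  assumes "1 \<le> k"
  shows "diff2 tp g k = pdelta tp k * (g (tp (Suc k)) - g (tp k))
                      - pdelta tp (Suc k) * (g (tp k) - g (tp (k-1)))"
  unfolding diff2_def by (simp add: algebra_simps)

lemma perturbed_square_diff_bound:
  fixes a b m \<theta> \<alpha> Ea Eb :: real
  assumes m: "0 < m" "m \<le> 1" and \<theta>: "0 \<le> \<theta>" and E: "0 \<le> Ea" "0 \<le> Eb"
    and a: "\<bar>a\<bar> \<le> Ea * m^2 * m powr \<alpha>" and b: "\<bar>b\<bar> \<le> Eb * m * m powr \<alpha>"
  shows "\<bar>(a + \<theta> * b)^2 - \<theta>^2 * b^2\<bar> \<le> Ea * (Ea + 2 * \<theta> * Eb) * m powr (3 + 2*\<alpha>)"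
proof -
  have "\<bar>a + 2 * \<theta> * b\<bar> \<le> Ea * m^2 * m powr \<alpha> + 2 * \<theta> * (Eb * m * m powr \<alpha>)"
    using a b \<theta> abs_triangle_ineq[of a "2*\<theta>*b"] mult_left_mono[OF b, of "2*\<theta>"]
    by (simp add: abs_mult)
  also have "\<dots> \<le> Ea * m * m powr \<alpha> + 2 * \<theta> * (Eb * m * m powr \<alpha>)"
    using m E by (intro add_mono mult_right_mono mult_left_mono)
      (auto simp: power2_eq_square mult_left_le_one_le)
  finally have ab: "\<bar>a + 2 * \<theta> * b\<bar> \<le> (Ea + 2 * \<theta> * Eb) * m * m powr \<alpha>"
    by (simp add: algebra_simps)
  have "\<bar>(a + \<theta> * b)^2 - \<theta>^2 * b^2\<bar> = \<bar>a\<bar> * \<bar>a + 2 * \<theta> * b\<bar>"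
    by (simp add: power2_eq_square algebra_simps abs_mult[symmetric])
  also have "\<dots> \<le> (Ea * m^2 * m powr \<alpha>) * ((Ea + 2 * \<theta> * Eb) * m * m powr \<alpha>)"
    using a ab by (intro mult_mono) auto
  also have "\<dots> = Ea * (Ea + 2 * \<theta> * Eb) * (m^3 * m powr \<alpha> * m powr \<alpha>)"
    by (simp add: power2_eq_square power3_eq_cube algebra_simps)
  also have "m^3 * m powr \<alpha> * m powr \<alpha> = m powr (3 + 2*\<alpha>)"
  proof -
    have "m^3 = m powr 3" using m by (simp add: powr_numeral)
    moreover have "3 + 2*\<alpha> = 3 + \<alpha> + \<alpha>" by simp
    ultimately show ?thesis by (simp only: powr_add)
  qed
  finally show ?thesis .
qed

lemma V2_denominator_lower_bound:
  fixes p d1 d2 H :: real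
  assumes p: "0 < p" "p \<le> d1" "p \<le> d2" and H: "0 < H"
  shows "2 * p powr (2*H + 2) \<le> d1 powr (H + 1/2) * d2 powr (H + 1/2) * (d1 + d2)"
proof -
  have "p powr (H + 1/2) * p powr (H + 1/2) * (p + p)
      \<le> d1 powr (H + 1/2) * d2 powr (H + 1/2) * (d1 + d2)"
    using p H by (intro mult_mono add_mono powr_mono2) auto
  moreover have "p powr (2*H + 2) = p powr (H + 1/2) * p powr (H + 1/2) * p"
  proof -
    have "2*H + 2 = (H + 1/2) + (H + 1/2) + 1" by simp
    then show ?thesis using p by (simp only: powr_add powr_one less_imp_le)
  qed
  ultimately show ?thesis by simp
qed

lemma V2_summand_diff_bound:
  fixes p m d1 d2 a b Ea Eb \<theta> \<alpha> H c :: real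
  assumes p: "0 < p" and d1: "p \<le> d1" "d1 \<le> m" and d2: "p \<le> d2" "d2 \<le> m"
    and mc: "m \<le> c * p" and m1: "m \<le> 1"
    and a: "\<bar>a\<bar> \<le> Ea * m^2 * m powr \<alpha>" and b: "\<bar>b\<bar> \<le> Eb * m * m powr \<alpha>"
    and E: "0 \<le> Ea" "0 \<le> Eb" and \<theta>: "0 \<le> \<theta>" and \<alpha>: "0 < \<alpha>" and H: "0 < H"
  shows "\<bar>d2 * ((a + \<theta> * b)^2 - \<theta>^2 * b^2) /
            (d1 powr (H + 1/2) * d2 powr (H + 1/2) * (d1 + d2))\<bar>
         \<le> Ea * (Ea + 2 * \<theta> * Eb) * c powr (4 + 2*\<alpha>) / 2 * p powr (2 + 2*\<alpha> - 2*H)"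
proof -
  define A where "A = Ea * (Ea + 2 * \<theta> * Eb)"
  have A: "A \<ge> 0" unfolding A_def using E \<theta> by auto
  have m: "0 < m" using p d1 by auto
  have c: "0 < c" using mc m p by (metis less_le_trans zero_less_mult_pos2)
  have den: "0 < 2 * p powr (2*H + 2)" using p by simp
  have "\<bar>d2 * ((a + \<theta> * b)^2 - \<theta>^2 * b^2) /
            (d1 powr (H + 1/2) * d2 powr (H + 1/2) * (d1 + d2))\<bar>
        = d2 * \<bar>(a + \<theta> * b)^2 - \<theta>^2 * b^2\<bar> / (d1 powr (H + 1/2) * d2 powr (H + 1/2) * (d1 + d2))"
    using p d1 d2 by (simp add: abs_mult abs_divide)
  also have "\<dots> \<le> m * (A * m powr (3 + 2*\<alpha>)) / (2 * p powr (2*H + 2))"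
  proof (rule frac_le)
    show "d2 * \<bar>(a + \<theta> * b)^2 - \<theta>^2 * b^2\<bar> \<le> m * (A * m powr (3 + 2*\<alpha>))"
      using perturbed_square_diff_bound[OF m m1 \<theta> E a b] d2 p unfolding A_def
      by (intro mult_mono) auto
  qed (use V2_denominator_lower_bound[OF p d1(1) d2(1) H] A m den in auto)
  also have "\<dots> = A * m powr (4 + 2*\<alpha>) / (2 * p powr (2*H + 2))"
  proof -
    have "4 + 2*\<alpha> = 1 + (3 + 2*\<alpha>)" by simp
    then have "m powr (4 + 2*\<alpha>) = m * m powr (3 + 2*\<alpha>)"
      using m by (simp only: powr_add powr_one less_imp_le)
    then show ?thesis by (simp add: mult_ac)
  qed
  also have "\<dots> \<le> A * (c * p) powr (4 + 2*\<alpha>) / (2 * p powr (2*H + 2))"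
    using A den mc m \<alpha> by (intro divide_right_mono mult_left_mono powr_mono2) auto
  also have "\<dots> = A * c powr (4 + 2*\<alpha>) / 2 * (p powr (4 + 2*\<alpha>) / p powr (2*H + 2))"
    using c p by (simp add: powr_mult)
  also have "p powr (4 + 2*\<alpha>) / p powr (2*H + 2) = p powr (2 + 2*\<alpha> - 2*H)"
    using p by (simp add: powr_diff[symmetric] algebra_simps)
  finally show ?thesis unfolding A_def .
qed

section \<open>Pathwise estimate for the fractional Ornstein--Uhlenbeck equation\<close>

locale fOU_path =
  fixes T \<mu> \<theta> x0 \<alpha> L :: real and x b :: "real \<Rightarrow> real"
  assumes T: "T > 0" and \<mu>: "\<mu> > 0" and \<theta>: "\<theta> > 0" and \<alpha>: "0 < \<alpha>" "\<alpha> \<le> 1" and L: "L \<ge> 0"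
    and cont: "continuous_on {0..T} x"
    and eq: "\<forall>t\<in>{0..T}. x t = x0 - \<mu> * integral {0..t} x + \<theta> * b t"
    and holder: "\<And>s t. 0 \<le> s \<Longrightarrow> s \<le> t \<Longrightarrow> t \<le> T \<Longrightarrow> \<bar>b t - b s\<bar> \<le> L * (t - s) powr \<alpha>"
begin

definition "drift t = x0 - \<mu> * integral {0..t} x"

lemma path_eq: "t \<in> {0..T} \<Longrightarrow> x t = drift t + \<theta> * b t"
  using eq unfolding drift_def by auto

lemma drift_mean_value:
  assumes "0 \<le> u" "u \<le> v" "v \<le> T"
  shows "\<exists>z\<in>{u..v}. drift v - drift u = (v - u) * (- \<mu> * x z)"
proof -
  have "\<exists>z\<in>{u..v}. drift v - drift u = (\<lambda>h. h * (- \<mu> * x z)) (v - u)"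
  proof (rule mvt_very_simple[OF assms(2)])
    fix z assume z: "u \<le> z" "z \<le> v"
    then have "z \<in> {0..T}" using assms by auto
    have "((\<lambda>t. x0 - \<mu> * integral {0..t} x) has_vector_derivative 0 - \<mu> * x z) (at z within {0..T})"
      by (intro has_vector_derivative_diff has_vector_derivative_const
          has_vector_derivative_mult_right integral_has_vector_derivative[OF cont] \<open>z \<in> {0..T}\<close>)
    then have "(drift has_vector_derivative (- \<mu> * x z)) (at z within {0..T})"
      unfolding drift_def[abs_def] by simp
    then have "(drift has_vector_derivative (- \<mu> * x z)) (at z within {u..v})"
      by (rule has_vector_derivative_within_subset) (use assms in auto)
    then show "(drift has_derivative (\<lambda>h. h * (- \<mu> * x z))) (at z within {u..v})"
      unfolding has_vector_derivative_def by simp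
  qed
  then show ?thesis by simp
qed

lemma path_holder:
  obtains LX where "LX \<ge> 0"
    "\<And>u v. 0 \<le> u \<Longrightarrow> u \<le> v \<Longrightarrow> v \<le> T \<Longrightarrow> \<bar>x v - x u\<bar> \<le> LX * (v - u) powr \<alpha>"
proof -
  have "bounded (x ` {0..T})" by (intro compact_imp_bounded compact_continuous_image cont) auto
  then obtain K where "\<forall>y\<in>x ` {0..T}. norm y \<le> K" unfolding bounded_iff by blast
  then have K: "\<And>t. t \<in> {0..T} \<Longrightarrow> \<bar>x t\<bar> \<le> K" by auto
  have K0: "K \<ge> 0" using K[of 0] T by auto
  define LX where "LX = \<mu> * K * T powr (1 - \<alpha>) + \<theta> * L"
  have "\<bar>x v - x u\<bar> \<le> LX * (v - u) powr \<alpha>" if u: "0 \<le> u" "u \<le> v" "v \<le> T" for u v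
  proof -
    obtain z where z: "z \<in> {u..v}" and Dz: "drift v - drift u = (v - u) * (- \<mu> * x z)"
      using drift_mean_value[OF u] by blast
    \<comment> \<open>a Lipschitz function on an interval of length T is \<alpha>-Hoelder\<close>
    have lip: "v - u \<le> T powr (1 - \<alpha>) * (v - u) powr \<alpha>"
    proof (cases "u = v")
      case False
      then have "v - u = (v - u) powr (1 - \<alpha>) * (v - u) powr \<alpha>"
        using u by (simp add: powr_add[symmetric])
      also have "\<dots> \<le> T powr (1 - \<alpha>) * (v - u) powr \<alpha>"
        using u \<alpha> False by (intro mult_right_mono powr_mono2) auto
      finally show ?thesis .
    qed simp
    have "\<bar>drift v - drift u\<bar> \<le> (v - u) * (\<mu> * K)"
      unfolding Dz using u \<mu> K[of z] z by (simp add: abs_mult mult_left_mono)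
    also have "\<dots> \<le> (T powr (1 - \<alpha>) * (v - u) powr \<alpha>) * (\<mu> * K)"
      using lip \<mu> K0 by (intro mult_right_mono) auto
    finally have "\<bar>drift v - drift u\<bar> \<le> \<mu> * K * T powr (1 - \<alpha>) * (v - u) powr \<alpha>"
      by (simp add: mult_ac)
    moreover have "x v - x u = (drift v - drift u) + \<theta> * (b v - b u)"
      using path_eq[of u] path_eq[of v] u by (simp add: algebra_simps)
    then have "\<bar>x v - x u\<bar> \<le> \<bar>drift v - drift u\<bar> + \<theta> * \<bar>b v - b u\<bar>"
      using \<theta> abs_triangle_ineq[of "drift v - drift u" "\<theta> * (b v - b u)"] by (simp add: abs_mult)
    ultimately have "\<bar>x v - x u\<bar> \<le> \<mu> * K * T powr (1 - \<alpha>) * (v - u) powr \<alpha> + \<theta> * (L * (v - u) powr \<alpha>)"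
      using holder[OF u] \<theta> by (smt (verit) mult_left_mono)
    then show ?thesis unfolding LX_def by (simp add: algebra_simps)
  qed
  moreover have "LX \<ge> 0" unfolding LX_def using \<mu> K0 \<theta> L by auto
  ultimately show ?thesis using that by blast
qed

lemma diff2_path:
  assumes P: "is_partition T N tp" and k: "1 \<le> k" "Suc k \<le> N"
  shows "diff2 tp x k = diff2 tp drift k + \<theta> * diff2 tp b k"
proof -
  have "tp (k-1) \<in> {0..T}" "tp k \<in> {0..T}" "tp (Suc k) \<in> {0..T}"
    using partition_neighbours[OF P k] by auto
  then show ?thesis unfolding diff2_def using path_eq by (simp add: algebra_simps)
qed

lemma diff2_drift_bound:
  obtains E where "E \<ge> 0" "\<And>N tp k. is_partition T N tp \<Longrightarrow> 1 \<le> k \<Longrightarrow> Suc k \<le> N \<Longrightarrow>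
      \<bar>diff2 tp drift k\<bar> \<le> E * (pmesh N tp)^2 * pmesh N tp powr \<alpha>"
proof -
  obtain LX where LX: "LX \<ge> 0"
    "\<And>u v. 0 \<le> u \<Longrightarrow> u \<le> v \<Longrightarrow> v \<le> T \<Longrightarrow> \<bar>x v - x u\<bar> \<le> LX * (v - u) powr \<alpha>"
    using path_holder by blast
  have "\<bar>diff2 tp drift k\<bar> \<le> (\<mu> * LX * 2 powr \<alpha>) * (pmesh N tp)^2 * pmesh N tp powr \<alpha>"
    if P: "is_partition T N tp" and k: "1 \<le> k" "Suc k \<le> N" for N tp k
  proof -
    note F = partition_neighbours[OF P k]
    define m where "m = pmesh N tp"
    define d1 where "d1 = pdelta tp k"
    define d2 where "d2 = pdelta tp (Suc k)"
    have d: "0 \<le> d1" "d1 \<le> m" "0 \<le> d2" "d2 \<le> m"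
      using F pmin_pos[OF P] unfolding d1_def d2_def m_def by auto
    obtain \<xi> where \<xi>: "\<xi> \<in> {tp k..tp (Suc k)}"
      and right: "drift (tp (Suc k)) - drift (tp k) = d2 * (- \<mu> * x \<xi>)"
      using drift_mean_value[of "tp k" "tp (Suc k)"] F unfolding d2_def by auto
    obtain \<eta> where \<eta>: "\<eta> \<in> {tp (k-1)..tp k}"
      and left: "drift (tp k) - drift (tp (k-1)) = d1 * (- \<mu> * x \<eta>)"
      using drift_mean_value[of "tp (k-1)" "tp k"] F unfolding d1_def by auto
    have "diff2 tp drift k = - \<mu> * (d1 * d2) * (x \<xi> - x \<eta>)"
      unfolding diff2_eq[OF k(1)] right left d1_def[symmetric] d2_def[symmetric]
      by (simp add: algebra_simps)
    then have "\<bar>diff2 tp drift k\<bar> = \<mu> * (d1 * d2) * \<bar>x \<xi> - x \<eta>\<bar>"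
      using \<mu> d by (simp add: abs_mult)
    also have "\<dots> \<le> \<mu> * (m * m) * (LX * (2 * m) powr \<alpha>)"
    proof (intro mult_mono mult_left_mono)
      have "\<bar>x \<xi> - x \<eta>\<bar> \<le> LX * (\<xi> - \<eta>) powr \<alpha>"
        using LX(2)[of \<eta> \<xi>] \<xi> \<eta> F by auto
      also have "\<dots> \<le> LX * (2 * m) powr \<alpha>"
        using \<xi> \<eta> F LX(1) \<alpha> d unfolding d1_def d2_def by (intro mult_left_mono powr_mono2) auto
      finally show "\<bar>x \<xi> - x \<eta>\<bar> \<le> LX * (2 * m) powr \<alpha>" .
    qed (use d \<mu> in auto)
    also have "\<dots> = (\<mu> * LX * 2 powr \<alpha>) * m^2 * m powr \<alpha>"
      using d by (simp add: powr_mult power2_eq_square mult_ac)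
    finally show ?thesis unfolding m_def .
  qed
  moreover have "\<mu> * LX * 2 powr \<alpha> \<ge> 0" using \<mu> LX(1) by simp
  ultimately show ?thesis using that by blast
qed

lemma diff2_noise_bound:
  assumes P: "is_partition T N tp" and k: "1 \<le> k" "Suc k \<le> N"
  shows "\<bar>diff2 tp b k\<bar> \<le> (2 * L) * pmesh N tp * pmesh N tp powr \<alpha>"
proof -
  note F = partition_neighbours[OF P k]
  define m where "m = pmesh N tp"
  have m: "0 < m" using F pmin_pos[OF P] unfolding m_def by linarith
  have b: "\<bar>b t - b s\<bar> \<le> L * m powr \<alpha>" if "0 \<le> s" "s \<le> t" "t \<le> T" "t - s \<le> m" for s t
    using holder[OF that(1-3)] mult_left_mono[OF powr_mono2[of \<alpha> "t - s" m], of L] that \<alpha> L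
    by auto
  have d: "0 \<le> pdelta tp k" "0 \<le> pdelta tp (Suc k)" using F pmin_pos[OF P] by linarith+
  have "\<bar>diff2 tp b k\<bar> \<le> \<bar>pdelta tp k * (b (tp (Suc k)) - b (tp k))\<bar>
      + \<bar>pdelta tp (Suc k) * (b (tp k) - b (tp (k-1)))\<bar>"
    unfolding diff2_eq[OF k(1)] by (rule abs_triangle_ineq4)
  also have "\<dots> = pdelta tp k * \<bar>b (tp (Suc k)) - b (tp k)\<bar>
      + pdelta tp (Suc k) * \<bar>b (tp k) - b (tp (k-1))\<bar>"
    using d by (simp add: abs_mult)
  also have "\<dots> \<le> m * (L * m powr \<alpha>) + m * (L * m powr \<alpha>)"
    using F b[of "tp k" "tp (Suc k)"] b[of "tp (k-1)" "tp k"] pmin_pos[OF P] L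
    unfolding m_def by (intro add_mono mult_mono) auto
  finally show ?thesis unfolding m_def by simp
qed

lemma V2_diff_eq:
  "V2 H N tp x - \<theta>^2 * V2 H N tp b = 2 * (\<Sum>k\<in>{1..<N}.
      pdelta tp (Suc k) * ((diff2 tp x k)^2 - \<theta>^2 * (diff2 tp b k)^2) /
      (pdelta tp k powr (H + 1/2) * pdelta tp (Suc k) powr (H + 1/2) * (pdelta tp k + pdelta tp (Suc k))))"
  unfolding V2_def by (simp add: sum_distrib_left sum_subtractf[symmetric] right_diff_distrib
      diff_divide_distrib mult_ac)

lemma V2_diff_bound:
  assumes H: "0 < H"
  obtains C where "\<And>N tp. is_partition T N tp \<Longrightarrow> pmesh N tp \<le> c * pmin N tp \<Longrightarrow> pmesh N tp \<le> 1 \<Longrightarrow>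
     \<bar>V2 H N tp x - \<theta>^2 * V2 H N tp b\<bar> \<le> C * pmin N tp powr (1 + 2*\<alpha> - 2*H)"
proof -
  obtain E where E: "E \<ge> 0" "\<And>N tp k. is_partition T N tp \<Longrightarrow> 1 \<le> k \<Longrightarrow> Suc k \<le> N \<Longrightarrow>
      \<bar>diff2 tp drift k\<bar> \<le> E * (pmesh N tp)^2 * pmesh N tp powr \<alpha>"
    using diff2_drift_bound by blast
  define Cp where "Cp = E * (E + 2 * \<theta> * (2 * L)) * c powr (4 + 2*\<alpha>) / 2"
  have Cp: "0 \<le> Cp" unfolding Cp_def using E \<theta> L by auto
  have "\<bar>V2 H N tp x - \<theta>^2 * V2 H N tp b\<bar> \<le> (2 * T * Cp) * pmin N tp powr (1 + 2*\<alpha> - 2*H)"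
    if P: "is_partition T N tp" and mc: "pmesh N tp \<le> c * pmin N tp" and m1: "pmesh N tp \<le> 1" for N tp
  proof -
    have exponent: "2 + 2*\<alpha> - 2*H = 1 + (1 + 2*\<alpha> - 2*H)" by simp
    let ?summand = "\<lambda>k. pdelta tp (Suc k) * ((diff2 tp x k)^2 - \<theta>^2 * (diff2 tp b k)^2) /
      (pdelta tp k powr (H + 1/2) * pdelta tp (Suc k) powr (H + 1/2) * (pdelta tp k + pdelta tp (Suc k)))"
    have summand: "\<bar>?summand k\<bar> \<le> Cp * pmin N tp powr (1 + (1 + 2*\<alpha> - 2*H))"
      if "k \<in> {1..<N}" for k
    proof -
      have k: "1 \<le> k" "Suc k \<le> N" using that by auto
      note F = partition_neighbours[OF P k]
      show ?thesis
        unfolding diff2_path[OF P k] Cp_def exponent[symmetric]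
      proof (rule V2_summand_diff_bound[OF pmin_pos[OF P] F(7,8,9,10) mc m1 E(2)[OF P k]
            diff2_noise_bound[OF P k] E(1)])
        show "0 \<le> 2 * L" "0 \<le> \<theta>" using L \<theta> by auto
      qed (use \<alpha> H in auto)
    qed
    from sum_le_pmin_powr[where f = ?summand, OF P Cp summand] show ?thesis
      unfolding V2_diff_eq by (simp add: abs_mult)
  qed
  then show ?thesis using that by blast
qed

lemma V2_diff_bigo:
  assumes H: "0 < H" and P: "\<And>n. is_partition T (N n) (tp n)"
    and mc: "\<And>n. pmesh (N n) (tp n) \<le> c * pmin (N n) (tp n)"
    and mesh: "(\<lambda>n. pmesh (N n) (tp n)) \<longlonglongrightarrow> 0"
  shows "(\<lambda>n. \<bar>V2 H (N n) (tp n) x - \<theta>^2 * V2 H (N n) (tp n) b\<bar>)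
           \<in> O(\<lambda>n. pmin (N n) (tp n) powr (1 + 2*\<alpha> - 2*H))"
proof -
  obtain C where C: "\<And>N tp. is_partition T N tp \<Longrightarrow> pmesh N tp \<le> c * pmin N tp \<Longrightarrow> pmesh N tp \<le> 1 \<Longrightarrow>
      \<bar>V2 H N tp x - \<theta>^2 * V2 H N tp b\<bar> \<le> C * pmin N tp powr (1 + 2*\<alpha> - 2*H)"
    using V2_diff_bound[OF H] by blast
  have "eventually (\<lambda>n. pmesh (N n) (tp n) < 1) sequentially"
    using mesh by (rule order_tendstoD) simp
  then have "eventually (\<lambda>n. norm \<bar>V2 H (N n) (tp n) x - \<theta>^2 * V2 H (N n) (tp n) b\<bar>
      \<le> \<bar>C\<bar> * norm (pmin (N n) (tp n) powr (1 + 2*\<alpha> - 2*H))) sequentially"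
  proof eventually_elim
    case (elim n)
    have "\<bar>V2 H (N n) (tp n) x - \<theta>^2 * V2 H (N n) (tp n) b\<bar>
        \<le> C * pmin (N n) (tp n) powr (1 + 2*\<alpha> - 2*H)"
      using C[OF P mc] elim by simp
    also have "\<dots> \<le> \<bar>C\<bar> * pmin (N n) (tp n) powr (1 + 2*\<alpha> - 2*H)"
      by (intro mult_right_mono) auto
    finally show ?case by simp
  qed
  then show ?thesis by (rule bigoI)
qed

end

lemma pmin_powr_bigo_mono:
  assumes P: "\<And>n. is_partition T (N n) (tp n)"
    and mesh: "(\<lambda>n. pmesh (N n) (tp n)) \<longlonglongrightarrow> 0" and e: "e \<le> e'"
  shows "(\<lambda>n. pmin (N n) (tp n) powr e') \<in> O(\<lambda>n. pmin (N n) (tp n) powr e)"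
proof (rule bigoI[where c=1])
  have "eventually (\<lambda>n. pmesh (N n) (tp n) < 1) sequentially"
    using mesh by (rule order_tendstoD) simp
  then show "eventually (\<lambda>n. norm (pmin (N n) (tp n) powr e') \<le> 1 * norm (pmin (N n) (tp n) powr e))
      sequentially"
  proof eventually_elim
    case (elim n)
    have "1 \<le> N n" using P[of n] unfolding is_partition_def by auto
    then have "0 < pmin (N n) (tp n)" "pmin (N n) (tp n) \<le> 1"
      using pmin_pos[OF P] pmin_le_pdelta_le_pmesh[of 1 "N n" "tp n"] elim by auto
    then show ?case using e by (simp add: powr_mono')
  qed
qed

theorem lemma2:
  fixes M :: "'a measure" and B X :: "real \<Rightarrow> 'a \<Rightarrow> real"
    and T \<mu> \<theta> x0 H c :: real
    and N :: "nat \<Rightarrow> nat" and tp :: "nat \<Rightarrow> nat \<Rightarrow> real"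
  assumes "T > 0" "\<mu> > 0" "\<theta> > 0" "0 < H" "H < 1"
    and "is_fBm M H B"
    and "AE \<omega> in M. continuous_on {0..T} (\<lambda>t. X t \<omega>) \<and>
           (\<forall>t\<in>{0..T}. X t \<omega> = x0 - \<mu> * integral {0..t} (\<lambda>s. X s \<omega>) + \<theta> * B t \<omega>)"
    and "\<And>n. is_partition T (N n) (tp n)"
    and "c \<ge> 1" and "\<And>n. pmesh (N n) (tp n) \<le> c * pmin (N n) (tp n)"
    and "(\<lambda>n. pmesh (N n) (tp n)) \<longlonglongrightarrow> 0"
  shows "\<forall>\<epsilon>>0. AE \<omega> in M.
           (\<lambda>n. \<bar>V2 H (N n) (tp n) (\<lambda>t. X t \<omega>) - \<theta>\<^sup>2 * V2 H (N n) (tp n) (\<lambda>t. B t \<omega>)\<bar>)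
             \<in> O(\<lambda>n. pmin (N n) (tp n) powr (1 - \<epsilon>))"
proof (intro allI impI)
  fix \<epsilon> :: real assume "\<epsilon> > 0"
  define \<alpha> where "\<alpha> = H - min \<epsilon> H / 2"
  have \<alpha>_range: "0 < \<alpha>" "\<alpha> < H" "\<alpha> \<le> 1" "1 - \<epsilon> \<le> 1 + 2*\<alpha> - 2*H"
    unfolding \<alpha>_def using \<open>\<epsilon> > 0\<close> assms(4,5) by auto
  from fBm_AE_holder[OF assms(6,1) \<alpha>_range(1,2)] assms(7)
  show "AE \<omega> in M. (\<lambda>n. \<bar>V2 H (N n) (tp n) (\<lambda>t. X t \<omega>) - \<theta>\<^sup>2 * V2 H (N n) (tp n) (\<lambda>t. B t \<omega>)\<bar>)
      \<in> O(\<lambda>n. pmin (N n) (tp n) powr (1 - \<epsilon>))"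
  proof eventually_elim
    case (elim \<omega>)
    then obtain L where "L \<ge> 0" "\<And>s t. 0 \<le> s \<Longrightarrow> s \<le> t \<Longrightarrow> t \<le> T \<Longrightarrow>
        \<bar>B t \<omega> - B s \<omega>\<bar> \<le> L * (t - s) powr \<alpha>" by blast
    then interpret fOU_path T \<mu> \<theta> x0 \<alpha> L "\<lambda>t. X t \<omega>" "\<lambda>t. B t \<omega>"
      using assms(1-3) \<alpha>_range elim by unfold_locales auto
    show ?case
      using landau_o.big_trans[OF V2_diff_bigo[OF assms(4,8,10,11)]
          pmin_powr_bigo_mono[OF assms(8,11) \<alpha>_range(4)]] by simp
  qed
qed

end
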